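(* For $n\ge 1$, let $\gamma(n)$ denote the number of partitions of $n$ having no part equal to $1$ and in which the largest part appears at least twice. Then for all $n\ge 3$, $$\gamma(n)\ \ge\ \gamma(n-2).$$
   Context: Partitions with no part equal to $1$ whose largest part occurs at least twice are called ground state non-unitary partitions; $\gamma(n)$ counts those of size $n$ (for $n\ge1$). *)

theory Defs
  imports Main "HOL-Library.Multiset"
begin

definition is_partition :: "nat multiset \<Rightarrow> nat \<Rightarrow> bool" where
  "is_partition p n \<longleftrightarrow> (\<forall>x\<in>#p. 0 < x) \<and> sum_mset p = n"

definition gsnu_partitions :: "nat \<Rightarrow> nat multiset set" where
  "gsnu_partitions n = {p. is_partition p n \<and> 1 \<notin># p \<and> p \<noteq> {#} \<and>
       count p (Max (set_mset p)) \<ge> 2}"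

definition gamma :: "nat \<Rightarrow> nat" where
  "gamma n = card (gsnu_partitions n)"

end

theory Submission
  imports Defs
begin

(* Adding a part 2 injects the ground state non-unitary partitions of n into those of
   n + 2: all parts are at least 2, so the largest part is unchanged and still occurs
   at least twice. *)

lemma size_le_sum_mset_pos:
  fixes p :: "nat multiset"
  assumes "\<forall>x\<in>#p. 0 < x"
  shows "size p \<le> sum_mset p"
  using assms by (induction p) fastforce+

lemma finite_partitions: "finite {p. is_partition p n}"
proof -
  have "{p. is_partition p n} \<subseteq> mset ` {xs. set xs \<subseteq> {..n} \<and> length xs \<le> n}"
  proof
    fix p assume "p \<in> {p. is_partition p n}"
    then have pos: "\<forall>x\<in>#p. 0 < x" and sum: "sum_mset p = n"
      by (auto simp: is_partition_def)
    obtain xs where xs: "mset xs = p" using ex_mset by blast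
    have "length xs \<le> n"
      using size_le_sum_mset_pos[OF pos] sum xs by auto
    moreover have "x \<le> n" if "x \<in> set xs" for x
    proof -
      have "x \<in># p"
        using that xs by auto
      then show "x \<le> n"
        using sum_mset.remove[of x p] sum by simp
    qed
    ultimately show "p \<in> mset ` {xs. set xs \<subseteq> {..n} \<and> length xs \<le> n}"
      using xs by auto
  qed
  moreover have "finite {xs. set xs \<subseteq> {..n} \<and> length xs \<le> n}"
    by (rule finite_lists_length_le) simp
  ultimately show ?thesis
    by (meson finite_surj)
qed

lemma finite_gsnu_partitions: "finite (gsnu_partitions n)"
  by (rule finite_subset[OF _ finite_partitions]) (auto simp: gsnu_partitions_def)

lemma Max_gsnu_partition_ge_2:
  assumes "p \<in> gsnu_partitions n"
  shows "2 \<le> Max (set_mset p)"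
proof -
  have "Max (set_mset p) \<in># p"
    using assms by (auto simp: gsnu_partitions_def)
  moreover have "\<forall>x\<in>#p. 0 < x" "1 \<notin># p"
    using assms by (auto simp: gsnu_partitions_def is_partition_def)
  ultimately show ?thesis
    by (metis One_nat_def Suc_1 Suc_leI le_neq_implies_less)
qed

lemma add_mset_mem_gsnu_partitions:
  assumes p: "p \<in> gsnu_partitions n" and "2 \<le> k" and "k \<le> Max (set_mset p)"
  shows "add_mset k p \<in> gsnu_partitions (n + k)"
proof -
  have "p \<noteq> {#}"
    using p by (simp add: gsnu_partitions_def)
  then have Max_eq: "Max (set_mset (add_mset k p)) = Max (set_mset p)"
    using \<open>k \<le> Max (set_mset p)\<close> by (simp add: max_absorb2)
  have "2 \<le> count p (Max (set_mset p))"
    using p by (simp add: gsnu_partitions_def)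
  then have "2 \<le> count (add_mset k p) (Max (set_mset (add_mset k p)))"
    using \<open>p \<noteq> {#}\<close> by (subst Max_eq) simp
  then show ?thesis
    using p \<open>2 \<le> k\<close> by (auto simp: gsnu_partitions_def is_partition_def)
qed

lemma gamma_le_gamma_add_2: "gamma n \<le> gamma (n + 2)"
  unfolding gamma_def
proof (rule card_inj_on_le[where f = "add_mset 2"])
  show "inj_on (add_mset 2) (gsnu_partitions n)"
    by (simp add: inj_on_def)
  show "add_mset 2 ` gsnu_partitions n \<subseteq> gsnu_partitions (n + 2)"
    using add_mset_mem_gsnu_partitions Max_gsnu_partition_ge_2 by blast
  show "finite (gsnu_partitions (n + 2))"
    by (rule finite_gsnu_partitions)
qed

theorem proposition1:
  fixes n :: nat
  assumes "n \<ge> 3"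
  shows "gamma n \<ge> gamma (n - 2)"
proof -
  have "n - 2 + 2 = n"
    using assms by simp
  then show ?thesis
    using gamma_le_gamma_add_2[of "n - 2"] by simp
qed

end
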